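(* Let $\Gamma$ be a metrized graph that is a tree with $v$ vertices. Then $$W(\Gamma)=\frac{1}{4} \Big[ v \cdot \ell(\Gamma) + \sum_{p, q \in V(\Gamma)} \mathrm{val}(q)\, r(p,q) \Big].$$ In particular, if each edge length is equal to $1$, $$W(\Gamma)=\frac{1}{4} \Big[ v(v-1)+ \sum_{p, q \in V(\Gamma)} \mathrm{val}(q)\, r(p,q) \Big].$$
   Context: A metrized graph is a finite connected graph each of whose edges is identified with a closed segment of positive length; its vertex set $V(\Gamma)$ is a finite nonempty set containing every point of valence $\neq 2$, and $v=\#V(\Gamma)$. $\mathrm{val}(q)$ is the valence of $q$ (number of directions emanating from $q$). $\ell(\Gamma)$ is the total length. $r(p,q)$ is the effective resistance between $p$ and $q$ (edges as resistors of resistance equal to length); on a tree it equals the path distance $d(p,q)$. The Wiener index is $W(\Gamma)=\frac12\sum_{p,q\in V(\Gamma)}d(p,q)$. *)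

theory Defs
  imports Complex_Main
begin

definition is_path :: "'a set set \<Rightarrow> 'a list \<Rightarrow> bool" where
  "is_path E xs \<longleftrightarrow> xs \<noteq> [] \<and> distinct xs \<and>
     (\<forall>i < length xs - 1. {xs ! i, xs ! Suc i} \<in> E)"

definition is_cycle :: "'a set set \<Rightarrow> 'a list \<Rightarrow> bool" where
  "is_cycle E xs \<longleftrightarrow> length xs \<ge> 3 \<and> is_path E xs \<and> {last xs, hd xs} \<in> E"

definition metrized_tree :: "'a set \<Rightarrow> 'a set set \<Rightarrow> ('a set \<Rightarrow> real) \<Rightarrow> bool" where
  "metrized_tree V E L \<longleftrightarrow>
     finite V \<and> V \<noteq> {} \<and>
     (\<forall>e\<in>E. \<exists>a b. a \<noteq> b \<and> a \<in> V \<and> b \<in> V \<and> e = {a, b}) \<and>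
     (\<forall>e\<in>E. L e > 0) \<and>
     (\<forall>p\<in>V. \<forall>q\<in>V. \<exists>xs. is_path E xs \<and> hd xs = p \<and> last xs = q) \<and>
     \<not> (\<exists>xs. is_cycle E xs)"

definition path_len :: "('a set \<Rightarrow> real) \<Rightarrow> 'a list \<Rightarrow> real" where
  "path_len L xs = (\<Sum>i < length xs - 1. L {xs ! i, xs ! Suc i})"

definition tree_dist :: "'a set set \<Rightarrow> ('a set \<Rightarrow> real) \<Rightarrow> 'a \<Rightarrow> 'a \<Rightarrow> real" where
  "tree_dist E L p q = Min {path_len L xs | xs. is_path E xs \<and> hd xs = p \<and> last xs = q}"

text \<open>Effective resistance; on a tree it equals the path distance (standing fact of the
context), which is how it is defined here for trees.\<close>
definition tree_resistance :: "'a set set \<Rightarrow> ('a set \<Rightarrow> real) \<Rightarrow> 'a \<Rightarrow> 'a \<Rightarrow> real" where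
  "tree_resistance E L p q = tree_dist E L p q"

definition valence :: "'a set set \<Rightarrow> 'a \<Rightarrow> nat" where
  "valence E q = card {e \<in> E. q \<in> e}"

definition total_length :: "'a set set \<Rightarrow> ('a set \<Rightarrow> real) \<Rightarrow> real" where
  "total_length E L = (\<Sum>e\<in>E. L e)"

definition wiener_index :: "'a set \<Rightarrow> 'a set set \<Rightarrow> ('a set \<Rightarrow> real) \<Rightarrow> real" where
  "wiener_index V E L = (1/2) * (\<Sum>p\<in>V. \<Sum>q\<in>V. tree_dist E L p q)"

end

theory Submission
  imports Defs
begin

text \<open>Root the tree at a vertex p. Every other vertex q has a parent, the penultimate vertex
of the unique path from p to q, and q \<mapsto> {parent q, q} is a bijection from V - {p} onto the edges.
Since d(p,q) = d(p, parent q) + L {parent q, q}, summing d(p,-) over the two endpoints of every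
edge gives sum_q val(q) d(p,q) = 2 sum_q d(p,q) - \<ell>(\<Gamma>). Summing over p yields the formula; for unit
lengths \<ell>(\<Gamma>) = #E = v - 1.\<close>

fun adj_chain :: "'a set set \<Rightarrow> 'a list \<Rightarrow> bool" where
  "adj_chain E [] = True"
| "adj_chain E [x] = True"
| "adj_chain E (x # y # xs) \<longleftrightarrow> {x, y} \<in> E \<and> adj_chain E (y # xs)"

fun chain_len :: "('a set \<Rightarrow> real) \<Rightarrow> 'a list \<Rightarrow> real" where
  "chain_len L [] = 0"
| "chain_len L [x] = 0"
| "chain_len L (x # y # xs) = L {x, y} + chain_len L (y # xs)"

lemma adj_chain_iff_nth: "adj_chain E xs \<longleftrightarrow> (\<forall>i < length xs - 1. {xs ! i, xs ! Suc i} \<in> E)"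
  by (induction E xs rule: adj_chain.induct) (auto simp: All_less_Suc2)

lemma is_path_iff_adj_chain: "is_path E xs \<longleftrightarrow> xs \<noteq> [] \<and> distinct xs \<and> adj_chain E xs"
  by (simp add: is_path_def adj_chain_iff_nth)

lemma path_len_eq_chain_len: "path_len L xs = chain_len L xs"
  unfolding path_len_def
  by (induction L xs rule: chain_len.induct)
    (auto simp del: sum.lessThan_Suc simp: sum.lessThan_Suc_shift)

lemma adj_chain_append:
  "adj_chain E (xs @ y # ys) \<longleftrightarrow> adj_chain E (xs @ [y]) \<and> adj_chain E (y # ys)"
proof (induction xs)
  case (Cons a xs) then show ?case by (cases xs) auto
qed auto

lemma adj_chain_ConsD: "adj_chain E (x # xs) \<Longrightarrow> adj_chain E xs"
  by (cases xs) auto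

lemma adj_chain_snoc:
  "xs \<noteq> [] \<Longrightarrow> adj_chain E (xs @ [y]) \<longleftrightarrow> adj_chain E xs \<and> {last xs, y} \<in> E"
proof (induction xs)
  case (Cons a xs) then show ?case by (cases xs) auto
qed auto

lemma adj_chain_rev: "adj_chain E (rev xs) \<longleftrightarrow> adj_chain E xs"
proof (induction E xs rule: adj_chain.induct)
  case (3 E x y xs)
  have "adj_chain E (rev (x # y # xs)) \<longleftrightarrow> adj_chain E (rev xs @ [y]) \<and> adj_chain E [y, x]"
    using adj_chain_append[of E "rev xs" y "[x]"] by simp
  then show ?case using 3 by (auto simp: insert_commute)
qed auto

lemma chain_len_snoc: "xs \<noteq> [] \<Longrightarrow> chain_len L (xs @ [y]) = chain_len L xs + L {last xs, y}"
proof (induction xs)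
  case (Cons a xs) then show ?case by (cases xs) auto
qed auto

text \<open>The cycle runs along xs to its first vertex on ys and back along ys.\<close>
lemma is_cycle_of_diverging_paths:
  assumes px: "is_path E (x # xs)" and py: "is_path E (x # ys)" and diverge: "hd xs \<noteq> hd ys"
    and meet: "\<exists>z \<in> set xs. z \<in> set ys"
  shows "\<exists>c. is_cycle E c"
proof -
  obtain A z B where xs: "xs = A @ z # B" and z: "z \<in> set ys" and A: "\<forall>a \<in> set A. a \<notin> set ys"
    using split_list_first_prop[OF meet] by blast
  obtain C D where ys: "ys = C @ z # D" using split_list[OF z] by blast
  define c where "c = x # A @ z # rev C"
  have "length c \<ge> 3"
    using diverge xs ys by (cases A; cases C) (auto simp: c_def)
  moreover have "distinct c"
    using px py xs ys A by (auto simp: c_def is_path_iff_adj_chain)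
  moreover have "adj_chain E c"
  proof -
    have "adj_chain E ((x # A) @ [z])"
      using px xs adj_chain_append[of E "x # A" z B] by (simp add: is_path_iff_adj_chain)
    moreover have "adj_chain E ((x # C) @ [z])"
      using py ys adj_chain_append[of E "x # C" z D] by (simp add: is_path_iff_adj_chain)
    then have "adj_chain E (z # rev C)"
      using adj_chain_ConsD adj_chain_rev[of E "C @ [z]"] by fastforce
    ultimately show ?thesis
      using adj_chain_append[of E "x # A" z "rev C"] by (simp add: c_def)
  qed
  moreover have "{last c, hd c} \<in> E"
    using py ys by (cases C) (auto simp: c_def insert_commute is_path_iff_adj_chain)
  ultimately have "is_cycle E c" by (simp add: is_cycle_def is_path_iff_adj_chain c_def)
  then show ?thesis by blast
qed

lemma sum_valence_mult:
  assumes "finite V" "finite E" "\<And>e. e \<in> E \<Longrightarrow> e \<subseteq> V"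
  shows "(\<Sum>q\<in>V. real (valence E q) * f q) = (\<Sum>e\<in>E. \<Sum>q\<in>e. f q)"
proof -
  have "(\<Sum>q\<in>V. real (valence E q) * f q) = (\<Sum>q\<in>V. \<Sum>e\<in>E. if q \<in> e then f q else 0)"
    using assms(2) by (simp add: valence_def sum.If_cases Int_def)
  also have "\<dots> = (\<Sum>e\<in>E. \<Sum>q\<in>V. if q \<in> e then f q else 0)"
    by (rule sum.swap)
  also have "\<dots> = (\<Sum>e\<in>E. \<Sum>q\<in>e. f q)"
    using assms(1,3) by (auto simp: sum.If_cases Int_absorb1 Int_def intro!: sum.cong)
  finally show ?thesis .
qed

locale finite_tree =
  fixes V :: "'a set" and E :: "'a set set"
  assumes finite_vertices: "finite V"
    and nonempty: "V \<noteq> {}"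
    and edge_doubleton: "e \<in> E \<Longrightarrow> \<exists>a b. a \<noteq> b \<and> a \<in> V \<and> b \<in> V \<and> e = {a, b}"
    and connected: "p \<in> V \<Longrightarrow> q \<in> V \<Longrightarrow> \<exists>xs. is_path E xs \<and> hd xs = p \<and> last xs = q"
    and acyclic: "\<not> is_cycle E c"

lemma metrized_tree_imp_finite_tree: "metrized_tree V E L \<Longrightarrow> finite_tree V E"
  by (simp add: metrized_tree_def finite_tree_def)

context finite_tree
begin

lemma edge_endpoints: "{a, b} \<in> E \<Longrightarrow> a \<in> V \<and> b \<in> V \<and> a \<noteq> b"
  using edge_doubleton[of "{a, b}"] by (auto simp: doubleton_eq_iff)

lemma edge_subset: "e \<in> E \<Longrightarrow> e \<subseteq> V"
  using edge_doubleton by blast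

lemma finite_edges: "finite E"
  using finite_subset[of E "Pow V"] edge_subset finite_vertices by blast

lemma path_unique:
  "is_path E xs \<Longrightarrow> is_path E ys \<Longrightarrow> hd xs = hd ys \<Longrightarrow> last xs = last ys \<Longrightarrow> xs = ys"
proof (induction xs arbitrary: ys)
  case Nil then show ?case by (simp add: is_path_iff_adj_chain)
next
  case (Cons x xs)
  obtain ys' where ys: "ys = x # ys'"
    using Cons.prems by (cases ys) (auto simp: is_path_iff_adj_chain)
  have no_return: "zs = []" if "is_path E (x # zs)" "last (x # zs) = x" for zs
    using that last_in_set[of zs] by (cases "zs = []") (auto simp: is_path_iff_adj_chain)
  have same_last: "last (x # xs) = last (x # ys')" using Cons.prems ys by simp
  have ys_path: "is_path E (x # ys')" using Cons.prems(2) ys by simp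
  show ?case
  proof (cases "xs = [] \<or> ys' = []")
    case True
    then have "xs = [] \<and> ys' = []"
      using no_return[OF Cons.prems(1)] no_return[OF ys_path] same_last by (metis last_ConsL)
    then show ?thesis using ys by simp
  next
    case False
    then have ne: "xs \<noteq> []" "ys' \<noteq> []" by auto
    have paths: "is_path E xs" "is_path E ys'"
      using Cons.prems ys ne adj_chain_ConsD by (auto simp: is_path_iff_adj_chain)
    have "last xs = last ys'" using Cons.prems ys ne by simp
    then have "\<exists>z \<in> set xs. z \<in> set ys'" using ne last_in_set by metis
    then have "hd xs = hd ys'"
      using is_cycle_of_diverging_paths[of E x xs ys'] Cons.prems ys acyclic by blast
    then show ?thesis using Cons.IH[OF paths] ys \<open>last xs = last ys'\<close> by simp
  qed
qed

definition tree_path :: "'a \<Rightarrow> 'a \<Rightarrow> 'a list" where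
  "tree_path p q = (THE xs. is_path E xs \<and> hd xs = p \<and> last xs = q)"

lemma tree_path_eq: "is_path E xs \<Longrightarrow> tree_path (hd xs) (last xs) = xs"
  unfolding tree_path_def by (rule the_equality) (auto intro: path_unique)

lemma tree_path:
  "p \<in> V \<Longrightarrow> q \<in> V \<Longrightarrow> is_path E (tree_path p q) \<and> hd (tree_path p q) = p \<and> last (tree_path p q) = q"
  using connected[of p q] tree_path_eq by metis

lemma tree_path_same: "tree_path p p = [p]"
  using tree_path_eq[of "[p]"] by (simp add: is_path_iff_adj_chain)

lemma tree_dist_eq: "p \<in> V \<Longrightarrow> q \<in> V \<Longrightarrow> tree_dist E L p q = chain_len L (tree_path p q)"
proof -
  assume "p \<in> V" "q \<in> V"
  then have "{path_len L xs | xs. is_path E xs \<and> hd xs = p \<and> last xs = q}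
      = {chain_len L (tree_path p q)}"
    using tree_path tree_path_eq by (auto simp: path_len_eq_chain_len)
  then show ?thesis by (simp add: tree_dist_def)
qed

lemma tree_dist_self: "p \<in> V \<Longrightarrow> tree_dist E L p p = 0"
  by (simp add: tree_dist_eq tree_path_same)

lemma tree_path_edge:
  assumes e: "{a, b} \<in> E" and p: "p \<in> V"
  shows "tree_path p b = tree_path p a @ [b] \<or> tree_path p a = tree_path p b @ [a]"
proof -
  have ab: "a \<in> V" "b \<in> V" "a \<noteq> b" using edge_endpoints[OF e] by auto
  define P where "P = tree_path p a"
  have P: "is_path E P" "hd P = p" "last P = a" using tree_path[OF p ab(1)] by (auto simp: P_def)
  show ?thesis
  proof (cases "b \<in> set P")
    case False
    then have "is_path E (P @ [b])"
      using P e adj_chain_snoc[of P E b] by (auto simp: is_path_iff_adj_chain)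
    then show ?thesis using tree_path_eq[of "P @ [b]"] P by (simp add: P_def is_path_iff_adj_chain)
  next
    case True
    then obtain X Y where P_split: "P = X @ b # Y" using split_list by metis
    have "Y \<noteq> []" using P P_split ab by auto
    then have "a = last Y" "a \<in> set Y" using P(3) P_split by auto
    then have a_notin: "a \<notin> set X" "a \<noteq> b" using P P_split by (auto simp: is_path_iff_adj_chain)
    have chain: "adj_chain E (X @ [b])"
      using P P_split adj_chain_append by (metis is_path_iff_adj_chain)
    then have "is_path E (X @ [b])" using P P_split by (auto simp: is_path_iff_adj_chain)
    moreover have "is_path E (X @ [b, a])"
      using chain e adj_chain_snoc[of "X @ [b]" E a] P P_split a_notin
      by (auto simp: is_path_iff_adj_chain insert_commute)
    moreover have "hd (X @ [b]) = p" "hd (X @ [b, a]) = p" using P P_split by (cases X; simp)+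
    ultimately show ?thesis using tree_path_eq[of "X @ [b]"] tree_path_eq[of "X @ [b, a]"] by auto
  qed
qed

definition parent :: "'a \<Rightarrow> 'a \<Rightarrow> 'a" where
  "parent p q = last (butlast (tree_path p q))"

lemma parent:
  assumes p: "p \<in> V" and q: "q \<in> V" and "q \<noteq> p"
  shows "parent p q \<in> V \<and> parent p q \<noteq> q \<and> {parent p q, q} \<in> E
    \<and> tree_path p q = tree_path p (parent p q) @ [q]"
proof -
  define B where "B = butlast (tree_path p q)"
  have P: "is_path E (tree_path p q)" "hd (tree_path p q) = p" "last (tree_path p q) = q"
    using tree_path[OF p q] by auto
  then have PB: "tree_path p q = B @ [q]"
    unfolding B_def by (metis append_butlast_last_id is_path_iff_adj_chain)
  have "B \<noteq> []" using PB P \<open>q \<noteq> p\<close> by auto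
  then have B: "is_path E B" "q \<notin> set B" "{last B, q} \<in> E"
    using P PB adj_chain_snoc[of B E q] by (auto simp: is_path_iff_adj_chain)
  have "tree_path p (last B) = B"
    using tree_path_eq[OF B(1)] P PB \<open>B \<noteq> []\<close> by simp
  moreover have "parent p q = last B" by (simp add: parent_def B_def)
  ultimately show ?thesis using PB B edge_endpoints[OF B(3)] by auto
qed

lemma length_tree_path_parent:
  "p \<in> V \<Longrightarrow> q \<in> V \<Longrightarrow> q \<noteq> p
    \<Longrightarrow> length (tree_path p q) = Suc (length (tree_path p (parent p q)))"
  using parent[of p q] by (metis length_append_singleton)

lemma parent_eqI:
  assumes p: "p \<in> V" and x: "x \<in> V" and path: "tree_path p y = tree_path p x @ [y]"
  shows "y \<noteq> p \<and> parent p y = x"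
proof -
  have "tree_path p x \<noteq> []" "last (tree_path p x) = x"
    using tree_path[OF p x] by (auto simp: is_path_iff_adj_chain)
  then show ?thesis using path tree_path_same[of p] by (auto simp: parent_def)
qed

lemma bij_betw_parent_edge:
  assumes p: "p \<in> V"
  shows "bij_betw (\<lambda>q. {parent p q, q}) (V - {p}) E"
proof -
  have "inj_on (\<lambda>q. {parent p q, q}) (V - {p})"
  proof (rule inj_onI, rule ccontr)
    fix q1 q2 assume q: "q1 \<in> V - {p}" "q2 \<in> V - {p}"
      and "{parent p q1, q1} = {parent p q2, q2}" and "q1 \<noteq> q2"
    then have "q1 = parent p q2" "q2 = parent p q1" by (metis doubleton_eq_iff)+
    then show False
      using length_tree_path_parent[OF p, of q1] length_tree_path_parent[OF p, of q2] q by simp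
  qed
  moreover have "(\<lambda>q. {parent p q, q}) ` (V - {p}) \<subseteq> E"
    using parent[OF p] by blast
  moreover have "e \<in> (\<lambda>q. {parent p q, q}) ` (V - {p})" if e: "e \<in> E" for e
  proof -
    have child_edge: "e \<in> (\<lambda>q. {parent p q, q}) ` (V - {p})"
      if "tree_path p y = tree_path p x @ [y]" "e = {x, y}" "x \<in> V" "y \<in> V" for x y
      using parent_eqI[OF p that(3,1)] that(2,4) by (intro image_eqI[of _ _ y]) auto
    obtain a b where ab: "e = {a, b}" using e edge_doubleton by blast
    then have "a \<in> V" "b \<in> V" using e edge_endpoints by auto
    then show ?thesis
      using tree_path_edge[OF e[unfolded ab] p] child_edge ab by (metis insert_commute)
  qed
  ultimately show ?thesis by (auto simp: bij_betw_def)
qed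

lemma card_edges: "card E = card V - 1"
proof -
  obtain p where "p \<in> V" using nonempty by blast
  then show ?thesis
    using bij_betw_same_card[OF bij_betw_parent_edge] finite_vertices by simp
qed

lemma tree_dist_parent:
  assumes "p \<in> V" "q \<in> V" "q \<noteq> p"
  shows "tree_dist E L p q = tree_dist E L p (parent p q) + L {parent p q, q}"
proof -
  have par: "parent p q \<in> V" "tree_path p q = tree_path p (parent p q) @ [q]"
    using parent[OF assms] by auto
  then have "tree_path p (parent p q) \<noteq> []" "last (tree_path p (parent p q)) = parent p q"
    using tree_path[OF assms(1) par(1)] by (auto simp: is_path_iff_adj_chain)
  then show ?thesis using tree_dist_eq[OF assms(1,2)] tree_dist_eq[OF assms(1) par(1)] par(2)
    by (simp add: chain_len_snoc)
qed

lemma sum_valence_tree_dist: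
  assumes p: "p \<in> V"
  shows "(\<Sum>q\<in>V. real (valence E q) * tree_dist E L p q)
    = 2 * (\<Sum>q\<in>V. tree_dist E L p q) - total_length E L"
proof -
  let ?d = "tree_dist E L p" and ?e = "\<lambda>q. {parent p q, q}"
  have "(\<Sum>q\<in>V. real (valence E q) * ?d q) = (\<Sum>e\<in>E. \<Sum>x\<in>e. ?d x)"
    by (rule sum_valence_mult[OF finite_vertices finite_edges edge_subset])
  also have "\<dots> = (\<Sum>q\<in>V - {p}. \<Sum>x\<in>?e q. ?d x)"
    using sum.reindex_bij_betw[OF bij_betw_parent_edge[OF p], of "sum ?d"] by simp
  also have "\<dots> = (\<Sum>q\<in>V - {p}. 2 * ?d q - L (?e q))"
    using parent[OF p] tree_dist_parent[OF p] by (intro sum.cong) auto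
  also have "\<dots> = 2 * (\<Sum>q\<in>V - {p}. ?d q) - (\<Sum>q\<in>V - {p}. L (?e q))"
    by (simp add: sum_subtractf sum_distrib_left)
  also have "(\<Sum>q\<in>V - {p}. L (?e q)) = total_length E L"
    using sum.reindex_bij_betw[OF bij_betw_parent_edge[OF p], of L] by (simp add: total_length_def)
  also have "(\<Sum>q\<in>V - {p}. ?d q) = (\<Sum>q\<in>V. ?d q)"
    using p finite_vertices tree_dist_self[OF p] by (simp add: sum_diff1)
  finally show ?thesis .
qed

lemma wiener_index_eq:
  "wiener_index V E L = (1/4) * (real (card V) * total_length E L
     + (\<Sum>p\<in>V. \<Sum>q\<in>V. real (valence E q) * tree_resistance E L p q))"
  using sum_valence_tree_dist
  by (simp add: wiener_index_def tree_resistance_def sum_subtractf sum_distrib_left)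

lemma total_length_unit: "(\<forall>e\<in>E. L e = 1) \<Longrightarrow> total_length E L = real (card V) - 1"
  using card_edges finite_vertices nonempty
  by (simp add: total_length_def of_nat_diff Suc_le_eq card_gt_0_iff)

end

theorem theorem4p2:
  fixes V :: "'a set" and E :: "'a set set" and L :: "'a set \<Rightarrow> real"
  assumes "metrized_tree V E L"
  shows "wiener_index V E L =
           (1/4) * (real (card V) * total_length E L
              + (\<Sum>p\<in>V. \<Sum>q\<in>V. real (valence E q) * tree_resistance E L p q))
       \<and> ((\<forall>e\<in>E. L e = 1) \<longrightarrow>
           wiener_index V E L =
           (1/4) * (real (card V) * (real (card V) - 1)
              + (\<Sum>p\<in>V. \<Sum>q\<in>V. real (valence E q) * tree_resistance E L p q)))"
proof -
  interpret finite_tree V E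
    using metrized_tree_imp_finite_tree[OF assms] .
  show ?thesis using wiener_index_eq total_length_unit by simp
qed

end
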